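(* The following $\Re$-modules are pairwise non-isomorphic: $R_{\frac{n-1}{2}}(-\frac14,-\frac14,-\frac14)$ for all odd $n\ge1$; $R_{\frac{n-2}{4}}(\frac{n-2}{8},\frac{n-2}{8},\frac{n-6}{8})$, $R_{\frac{n-2}{4}}(\frac{n-2}{8},\frac{n-6}{8},\frac{n-2}{8})$, $R_{\frac{n-2}{4}}(\frac{n-6}{8},\frac{n-2}{8},\frac{n-2}{8})$ for all $n\ge2$ with $n\equiv2\pmod4$; $R_{\frac{n-6}{4}}(\frac{n-2}{8},\frac{n-2}{8},\frac{n-2}{8})$ for all $n\ge6$ with $n\equiv2\pmod4$; $R_{\frac n4-1}(\frac{n-4}{8},\frac{n-4}{8},\frac n8)$, $R_{\frac n4-1}(\frac{n-4}{8},\frac n8,\frac{n-4}{8})$, $R_{\frac n4-1}(\frac n8,\frac{n-4}{8},\frac{n-4}{8})$ for all $n\ge4$ with $n\equiv0\pmod4$; $R_{\frac n4}(\frac{n-4}{8},\frac{n-4}{8},\frac{n-4}{8})$ for all $n\ge0$ with $n\equiv0\pmod4$.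
   Context: $\Re$ is the unital associative $\mathbb C$-algebra generated by $A,B,C,\Delta$ with $[A,B]=[B,C]=[C,A]=2\Delta$ and such that $\alpha=[A,\Delta]+AC-BA$, $\beta=[B,\Delta]+BA-CB$, $\gamma=[C,\Delta]+CB-AC$ are central; $\delta=A+B+C$. For $a,b,c\in\mathbb C$, $d\in\mathbb N$, $R_d(a,b,c)$ is the $(d+1)$-dimensional $\Re$-module (determined up to isomorphism) with a basis in which $A$ is lower bidiagonal with diagonal $\theta_i=(a+\frac d2-i)(a+\frac d2-i+1)$ ($0\le i\le d$) and subdiagonal entries $1$, $B$ is upper bidiagonal with diagonal $\theta^*_i=(b+\frac d2-i)(b+\frac d2-i+1)$ and superdiagonal $\varphi_i=i(i-d-1)(a+b+c+\frac d2-i+2)(a+b-c+\frac d2-i+1)$ ($1\le i\le d$), and $\alpha,\beta,\gamma,\delta$ act as the scalars $(c-b)(c+b+1)(a-\frac d2)(a+\frac d2+1)$, $(a-c)(a+c+1)(b-\frac d2)(b+\frac d2+1)$, $(b-a)(b+a+1)(c-\frac d2)(c+\frac d2+1)$, $\frac d2(\frac d2+1)+a(a+1)+b(b+1)+c(c+1)$. *)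

theory Defs
  imports "Jordan_Normal_Form.Matrix"
begin

text \<open>The module R_d(a,b,c) of the algebra generated by A,B,C,Delta, given by the
matrices of the generators with respect to the distinguished basis v_0,...,v_d.
A is lower bidiagonal, B upper bidiagonal; C and Delta are then forced by the
relations: delta = A+B+C acts as a scalar, and [A,B] = 2 Delta.\<close>

definition R_theta :: "nat \<Rightarrow> complex \<Rightarrow> nat \<Rightarrow> complex" where
  "R_theta d a i = (a + of_nat d / 2 - of_nat i) * (a + of_nat d / 2 - of_nat i + 1)"

definition R_phi :: "nat \<Rightarrow> complex \<Rightarrow> complex \<Rightarrow> complex \<Rightarrow> nat \<Rightarrow> complex" where
  "R_phi d a b c i = of_nat i * (of_nat i - of_nat d - 1)
      * (a + b + c + of_nat d / 2 - of_nat i + 2) * (a + b - c + of_nat d / 2 - of_nat i + 1)"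

definition R_delta :: "nat \<Rightarrow> complex \<Rightarrow> complex \<Rightarrow> complex \<Rightarrow> complex" where
  "R_delta d a b c = (of_nat d / 2) * (of_nat d / 2 + 1) + a * (a + 1) + b * (b + 1) + c * (c + 1)"

definition R_A :: "nat \<Rightarrow> complex \<Rightarrow> complex mat" where
  "R_A d a = mat (d + 1) (d + 1)
     (\<lambda>(i, j). if i = j then R_theta d a i else if i = j + 1 then 1 else 0)"

definition R_B :: "nat \<Rightarrow> complex \<Rightarrow> complex \<Rightarrow> complex \<Rightarrow> complex mat" where
  "R_B d a b c = mat (d + 1) (d + 1)
     (\<lambda>(i, j). if i = j then R_theta d b i else if j = i + 1 then R_phi d a b c j else 0)"

definition R_C :: "nat \<Rightarrow> complex \<Rightarrow> complex \<Rightarrow> complex \<Rightarrow> complex mat" where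
  "R_C d a b c = R_delta d a b c \<cdot>\<^sub>m 1\<^sub>m (d + 1) - R_A d a - R_B d a b c"

definition R_Delta :: "nat \<Rightarrow> complex \<Rightarrow> complex \<Rightarrow> complex \<Rightarrow> complex mat" where
  "R_Delta d a b c = (1 / 2 :: complex) \<cdot>\<^sub>m (R_A d a * R_B d a b c - R_B d a b c * R_A d a)"

definition R_iso :: "nat \<Rightarrow> complex \<Rightarrow> complex \<Rightarrow> complex \<Rightarrow>
                     nat \<Rightarrow> complex \<Rightarrow> complex \<Rightarrow> complex \<Rightarrow> bool" where
  "R_iso d a b c d' a' b' c' \<longleftrightarrow> d = d' \<and>
     (\<exists>P \<in> carrier_mat (d + 1) (d + 1). invertible_mat P
        \<and> P * R_A d a = R_A d' a' * P
        \<and> P * R_B d a b c = R_B d' a' b' c' * P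
        \<and> P * R_C d a b c = R_C d' a' b' c' * P
        \<and> P * R_Delta d a b c = R_Delta d' a' b' c' * P)"

datatype Rlabel =
    L1 nat | L2a nat | L2b nat | L2c nat | L3 nat | L4a nat | L4b nat | L4c nat | L5 nat

fun Rlabel_valid :: "Rlabel \<Rightarrow> bool" where
  "Rlabel_valid (L1 n) = (odd n \<and> n \<ge> 1)"
| "Rlabel_valid (L2a n) = (n \<ge> 2 \<and> n mod 4 = 2)"
| "Rlabel_valid (L2b n) = (n \<ge> 2 \<and> n mod 4 = 2)"
| "Rlabel_valid (L2c n) = (n \<ge> 2 \<and> n mod 4 = 2)"
| "Rlabel_valid (L3 n) = (n \<ge> 6 \<and> n mod 4 = 2)"
| "Rlabel_valid (L4a n) = (n \<ge> 4 \<and> n mod 4 = 0)"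
| "Rlabel_valid (L4b n) = (n \<ge> 4 \<and> n mod 4 = 0)"
| "Rlabel_valid (L4c n) = (n \<ge> 4 \<and> n mod 4 = 0)"
| "Rlabel_valid (L5 n) = (n mod 4 = 0)"

fun Rlabel_params :: "Rlabel \<Rightarrow> nat \<times> complex \<times> complex \<times> complex" where
  "Rlabel_params (L1 n) = ((n - 1) div 2, -1/4, -1/4, -1/4)"
| "Rlabel_params (L2a n) = ((n - 2) div 4, (of_nat n - 2)/8, (of_nat n - 2)/8, (of_nat n - 6)/8)"
| "Rlabel_params (L2b n) = ((n - 2) div 4, (of_nat n - 2)/8, (of_nat n - 6)/8, (of_nat n - 2)/8)"
| "Rlabel_params (L2c n) = ((n - 2) div 4, (of_nat n - 6)/8, (of_nat n - 2)/8, (of_nat n - 2)/8)"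
| "Rlabel_params (L3 n) = ((n - 6) div 4, (of_nat n - 2)/8, (of_nat n - 2)/8, (of_nat n - 2)/8)"
| "Rlabel_params (L4a n) = (n div 4 - 1, (of_nat n - 4)/8, (of_nat n - 4)/8, of_nat n / 8)"
| "Rlabel_params (L4b n) = (n div 4 - 1, (of_nat n - 4)/8, of_nat n / 8, (of_nat n - 4)/8)"
| "Rlabel_params (L4c n) = (n div 4 - 1, of_nat n / 8, (of_nat n - 4)/8, (of_nat n - 4)/8)"
| "Rlabel_params (L5 n) = (n div 4, (of_nat n - 4)/8, (of_nat n - 4)/8, (of_nat n - 4)/8)"

definition Rlabel_iso :: "Rlabel \<Rightarrow> Rlabel \<Rightarrow> bool" where
  "Rlabel_iso x y = (case Rlabel_params x of (d, a, b, c) \<Rightarrow>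
                      case Rlabel_params y of (d', a', b', c') \<Rightarrow> R_iso d a b c d' a' b' c')"

end

theory Submission
  imports Defs
begin

text \<open>The traces of A, B and C are similarity invariants. On R_d(a,b,c) they equal
(d+1) a(a+1), (d+1) b(b+1) and (d+1) c(c+1) up to terms depending only on d, so
isomorphic modules share d and the values a(a+1), b(b+1), c(c+1). For every module
in the list the numbers w = 8a+4, 8b+4, 8c+4 are non-negative integers; since
x(x+1) = y(y+1) forces x = y or x + y = -1, i.e. w = w' or w + w' = 0, the
Casimir values determine these weights, and d together with the weights determines
the label.\<close>

definition mat_trace :: "'a :: comm_semiring_0 mat \<Rightarrow> 'a" where
  "mat_trace A = (\<Sum>i<dim_row A. A $$ (i, i))"

lemma mat_trace_mult_comm:
  assumes "A \<in> carrier_mat n m" "B \<in> carrier_mat m n"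
  shows "mat_trace (A * B) = mat_trace (B * A)"
proof -
  have "mat_trace (A * B) = (\<Sum>i<n. \<Sum>k<m. A $$ (i, k) * B $$ (k, i))"
    using assms unfolding mat_trace_def
    by (auto simp: scalar_prod_def intro!: sum.cong simp flip: atLeast0LessThan)
  also have "\<dots> = (\<Sum>k<m. \<Sum>i<n. B $$ (k, i) * A $$ (i, k))"
    by (subst sum.swap) (simp add: mult.commute)
  also have "\<dots> = mat_trace (B * A)"
    using assms unfolding mat_trace_def
    by (auto simp: scalar_prod_def intro!: sum.cong simp flip: atLeast0LessThan)
  finally show ?thesis .
qed

lemma mat_trace_intertwined:
  fixes A A' P :: "'a :: comm_semiring_1 mat"
  assumes P: "P \<in> carrier_mat n n" "invertible_mat P"
    and A: "A \<in> carrier_mat n n" "A' \<in> carrier_mat n n"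
    and PA: "P * A = A' * P"
  shows "mat_trace A = mat_trace A'"
proof -
  obtain Q where PQ: "P * Q = 1\<^sub>m n" and QP: "Q * P = 1\<^sub>m (dim_row Q)"
    using P unfolding invertible_mat_def inverts_mat_def by auto
  have Q: "Q \<in> carrier_mat n n"
    using PQ QP P by (metis carrier_matD(2) carrier_matI index_mult_mat(3) index_one_mat(3))
  have QP': "Q * P = 1\<^sub>m n"
    using QP Q by simp
  have "A' = A' * P * Q"
    using A P Q PQ by (simp add: assoc_mult_mat[OF A(2) P(1) Q])
  also have "\<dots> = P * (A * Q)"
    unfolding PA[symmetric] by (rule assoc_mult_mat[OF P(1) A(1) Q])
  finally have "mat_trace A' = mat_trace (P * (A * Q))"
    by (rule arg_cong)
  also have "\<dots> = mat_trace (A * Q * P)"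
    using P A Q by (intro mat_trace_mult_comm) auto
  also have "\<dots> = mat_trace A"
    using A by (simp add: assoc_mult_mat[OF A(1) Q P(1)] QP')
  finally show ?thesis ..
qed

lemma mult_succ_eq_iff:
  fixes x y :: "'a :: idom"
  shows "x * (x + 1) = y * (y + 1) \<longleftrightarrow> x = y \<or> x + y = - 1"
proof -
  have "x * (x + 1) = y * (y + 1) \<longleftrightarrow> (x - y) * (x + y + 1) = 0"
    by (simp add: eq_iff_diff_eq_0[of "x * (x + 1)"] algebra_simps)
  also have "\<dots> \<longleftrightarrow> x = y \<or> x + y = - 1"
    by (simp add: eq_neg_iff_add_eq_0)
  finally show ?thesis .
qed

lemma sum_R_theta:
  "(\<Sum>i\<le>d. R_theta d a i) = of_nat (d + 1) * (a * (a + 1)) + (\<Sum>i\<le>d. R_theta d 0 i)"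
proof -
  have "R_theta d a i = R_theta d 0 i + a * (a + 1) + a * (of_nat d + of_nat i * - 2)" for i
    by (simp add: R_theta_def algebra_simps)
  moreover have "(\<Sum>i\<le>d. of_nat d + of_nat i * - 2 :: complex) = 0"
    using double_arith_series[where n = d and a = "of_nat d" and d = "- 2 :: complex"]
    by (simp add: atLeast0AtMost)
  ultimately show ?thesis
    by (simp add: sum.distrib flip: sum_distrib_left)
qed

lemma mat_trace_R_A:
  "mat_trace (R_A d a) = of_nat (d + 1) * (a * (a + 1)) + (\<Sum>i\<le>d. R_theta d 0 i)"
proof -
  have "mat_trace (R_A d a) = (\<Sum>i\<le>d. R_theta d a i)"
    unfolding mat_trace_def R_A_def lessThan_Suc_atMost[symmetric] by (rule sum.cong) auto
  then show ?thesis by (simp only: sum_R_theta[of d a])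
qed

lemma mat_trace_R_B:
  "mat_trace (R_B d a b c) = of_nat (d + 1) * (b * (b + 1)) + (\<Sum>i\<le>d. R_theta d 0 i)"
proof -
  have "mat_trace (R_B d a b c) = (\<Sum>i\<le>d. R_theta d b i)"
    unfolding mat_trace_def R_B_def lessThan_Suc_atMost[symmetric] by (rule sum.cong) auto
  then show ?thesis by (simp only: sum_R_theta[of d b])
qed

lemma mat_trace_R_C:
  "mat_trace (R_C d a b c) = of_nat (d + 1) * (c * (c + 1) + of_nat d / 2 * (of_nat d / 2 + 1))
     - 2 * (\<Sum>i\<le>d. R_theta d 0 i)"
proof -
  have "mat_trace (R_C d a b c) = (\<Sum>i\<le>d. R_delta d a b c - R_theta d a i - R_theta d b i)"
    unfolding mat_trace_def R_C_def R_A_def R_B_def lessThan_Suc_atMost[symmetric]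
    by (rule sum.cong) auto
  also have "\<dots> = of_nat (d + 1) * R_delta d a b c
      - (\<Sum>i\<le>d. R_theta d a i) - (\<Sum>i\<le>d. R_theta d b i)"
    by (simp add: sum_subtractf)
  also have "\<dots> = of_nat (d + 1) * (c * (c + 1) + of_nat d / 2 * (of_nat d / 2 + 1))
     - 2 * (\<Sum>i\<le>d. R_theta d 0 i)"
    unfolding sum_R_theta[of d a] sum_R_theta[of d b] R_delta_def by (simp add: ring_distribs)
  finally show ?thesis .
qed

lemma R_carrier_mat:
  "R_A d a \<in> carrier_mat (d + 1) (d + 1)"
  "R_B d a b c \<in> carrier_mat (d + 1) (d + 1)"
  "R_C d a b c \<in> carrier_mat (d + 1) (d + 1)"
  unfolding R_A_def R_B_def R_C_def by auto

lemma R_iso_casimirs: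
  assumes "R_iso d a b c d' a' b' c'"
  shows "d' = d" "a' * (a' + 1) = a * (a + 1)" "b' * (b' + 1) = b * (b + 1)"
    "c' * (c' + 1) = c * (c + 1)"
proof -
  from assms show d: "d' = d"
    unfolding R_iso_def by simp
  from assms obtain P where P: "P \<in> carrier_mat (d + 1) (d + 1)" "invertible_mat P"
    and PA: "P * R_A d a = R_A d a' * P" and PB: "P * R_B d a b c = R_B d a' b' c' * P"
    and PC: "P * R_C d a b c = R_C d a' b' c' * P"
    unfolding R_iso_def d by blast
  have "mat_trace (R_A d a) = mat_trace (R_A d a')"
    by (rule mat_trace_intertwined[OF P R_carrier_mat(1) R_carrier_mat(1) PA])
  moreover have "mat_trace (R_B d a b c) = mat_trace (R_B d a' b' c')"
    by (rule mat_trace_intertwined[OF P R_carrier_mat(2) R_carrier_mat(2) PB])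
  moreover have "mat_trace (R_C d a b c) = mat_trace (R_C d a' b' c')"
    by (rule mat_trace_intertwined[OF P R_carrier_mat(3) R_carrier_mat(3) PC])
  moreover have "of_nat (d + 1) \<noteq> (0 :: complex)"
    by (simp del: of_nat_Suc)
  ultimately show "a' * (a' + 1) = a * (a + 1)" "b' * (b' + 1) = b * (b + 1)"
    "c' * (c' + 1) = c * (c + 1)"
    unfolding mat_trace_R_A mat_trace_R_B mat_trace_R_C by simp_all
qed

fun Rlabel_weights :: "Rlabel \<Rightarrow> int \<times> int \<times> int" where
  "Rlabel_weights (L1 n) = (2, 2, 2)"
| "Rlabel_weights (L2a n) = (int n + 2, int n + 2, int n - 2)"
| "Rlabel_weights (L2b n) = (int n + 2, int n - 2, int n + 2)"
| "Rlabel_weights (L2c n) = (int n - 2, int n + 2, int n + 2)"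
| "Rlabel_weights (L3 n) = (int n + 2, int n + 2, int n + 2)"
| "Rlabel_weights (L4a n) = (int n, int n, int n + 4)"
| "Rlabel_weights (L4b n) = (int n, int n + 4, int n)"
| "Rlabel_weights (L4c n) = (int n + 4, int n, int n)"
| "Rlabel_weights (L5 n) = (int n, int n, int n)"

lemma Rlabel_params_weights:
  assumes "Rlabel_params x = (d, a, b, c)" "Rlabel_weights x = (p, q, r)"
  shows "8 * a + 4 = of_int p" "8 * b + 4 = of_int q" "8 * c + 4 = of_int r"
proof -
  have "8 * fst (snd (Rlabel_params x)) + 4 = of_int (fst (Rlabel_weights x))"
    "8 * fst (snd (snd (Rlabel_params x))) + 4 = of_int (fst (snd (Rlabel_weights x)))"
    "8 * snd (snd (snd (Rlabel_params x))) + 4 = of_int (snd (snd (Rlabel_weights x)))"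
    by (cases x; simp add: field_simps)+
  then show "8 * a + 4 = of_int p" "8 * b + 4 = of_int q" "8 * c + 4 = of_int r"
    using assms by simp_all
qed

lemma Rlabel_weights_nonneg:
  assumes "Rlabel_valid x" "Rlabel_weights x = (p, q, r)"
  shows "p \<ge> 0" "q \<ge> 0" "r \<ge> 0"
  using assms by (cases x; auto)+

lemma Rlabel_eqI:
  assumes "Rlabel_valid x" "Rlabel_valid y"
    and "fst (Rlabel_params x) = fst (Rlabel_params y)" "Rlabel_weights x = Rlabel_weights y"
  shows "x = y"
  using assms by (cases x; cases y; simp; presburger)

lemma weight_eq_if_casimir_eq:
  fixes x y :: complex
  assumes "x * (x + 1) = y * (y + 1)" "8 * x + 4 = of_int p" "8 * y + 4 = of_int q"
    and "p \<ge> 0" "q \<ge> 0"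
  shows "p = q"
proof -
  consider "x = y" | "x + y = - 1"
    using assms(1) mult_succ_eq_iff by blast
  then show ?thesis
  proof cases
    case 1
    then show ?thesis
      using assms(2,3) by simp
  next
    case 2
    have "(of_int (p + q) :: complex) = 8 * (x + y + 1)"
      unfolding of_int_add assms(2,3)[symmetric] by (simp add: algebra_simps)
    also have "\<dots> = 0"
      using 2 by simp
    finally have "p + q = 0"
      by (simp only: of_int_eq_0_iff)
    then show ?thesis
      using assms(4,5) by linarith
  qed
qed

theorem proposition7p7:
  shows "\<forall>x y. Rlabel_valid x \<and> Rlabel_valid y \<and> x \<noteq> y \<longrightarrow> \<not> Rlabel_iso x y"
proof (intro allI impI notI)
  fix x y
  assume valid: "Rlabel_valid x \<and> Rlabel_valid y \<and> x \<noteq> y" and iso: "Rlabel_iso x y"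
  obtain d a b c where px: "Rlabel_params x = (d, a, b, c)" by (metis prod_cases4)
  obtain d' a' b' c' where py: "Rlabel_params y = (d', a', b', c')" by (metis prod_cases4)
  obtain p q r where wx: "Rlabel_weights x = (p, q, r)" by (metis prod_cases3)
  obtain p' q' r' where wy: "Rlabel_weights y = (p', q', r')" by (metis prod_cases3)
  have "R_iso d a b c d' a' b' c'"
    using iso px py unfolding Rlabel_iso_def by simp
  note casimirs = R_iso_casimirs[OF this]
  note weights = Rlabel_params_weights[OF px wx] Rlabel_params_weights[OF py wy]
  note nonneg = Rlabel_weights_nonneg[OF _ wx] Rlabel_weights_nonneg[OF _ wy]
  have "p' = p" "q' = q" "r' = r"
    using casimirs weights nonneg valid by (auto intro: weight_eq_if_casimir_eq)
  then have "x = y"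
    using valid casimirs(1) px py wx wy by (intro Rlabel_eqI) auto
  with valid show False by simp
qed

end
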